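(* Let $\psi_S$ be the Shannon wavelet, i.e. $|\hat\psi_S(\xi)|^2=1$ if $|\xi|\in[\pi,2\pi]$ and $0$ otherwise, and take $\psi=\psi_S$ in the definitions of the context. Then for every $d\in\mathbb{R}$ and $\ell\ge1$, $$\sum_{i,j=0}^\ell w^{AV}_iV_d(i,j)w^{AV}_j=\frac{\pi\,g(-4d)}{2(2-2^{-\ell})\kappa_\ell\log^2(2)\,g^2(-2d)},\qquad g(x)=\int_\pi^{2\pi}\lambda^x\,d\lambda.$$
   Context: For a wavelet $\psi$ with Fourier transform $\hat\psi(\xi)=\int\psi(t)e^{-i\xi t}dt$: for $u\ge0$, $\mathbf e_u(\xi)=2^{-u/2}[1,e^{-i2^{-u}\xi},\dots,e^{-i(2^u-1)2^{-u}\xi}]^T$, $\mathbf D_u(\lambda;d)=\sum_{l\in\mathbb{Z}}|\lambda+2l\pi|^{-2d}\mathbf e_u(\lambda+2l\pi)\overline{\hat\psi(\lambda+2l\pi)}\hat\psi(2^{-u}(\lambda+2l\pi))$, $I_u(d)=\int_{-\pi}^{\pi}|\mathbf D_u(\lambda;d)|^2d\lambda$, $K(d)=\int_{\mathbb{R}}|\xi|^{-2d}|\hat\psi(\xi)|^2d\xi$, $V_d(i,j)=\frac{4\pi\,2^{2d|i-j|}2^{i\wedge j}}{K(d)^2}I_{|i-j|}(d)$. For $\ell\ge1$: $\eta_\ell=\sum_{j=0}^\ell j\frac{2^{-j}}{2-2^{-\ell}}$, $\kappa_\ell=\sum_{j=0}^\ell(j-\eta_\ell)^2\frac{2^{-j}}{2-2^{-\ell}}$,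 $w^{AV}_i=\frac{(i-\eta_\ell)2^{-i}}{2\log(2)\kappa_\ell(2-2^{-\ell})}$, $i=0,\dots,\ell$. *)

theory Defs
  imports "HOL-Analysis.Analysis"
begin

text \<open>The wavelet is represented through its Fourier transform psi_hat :: real => complex.
  Vectors in C^(2^u) are represented as functions nat => complex on indices k < 2^u.\<close>

definition e_vec :: "nat \<Rightarrow> real \<Rightarrow> nat \<Rightarrow> complex" where
  "e_vec u \<xi> k = complex_of_real (2 powr (- real u / 2)) *
     exp (- \<i> * complex_of_real (real k * 2 powr (- real u) * \<xi>))"

definition D_vec :: "(real \<Rightarrow> complex) \<Rightarrow> nat \<Rightarrow> real \<Rightarrow> real \<Rightarrow> nat \<Rightarrow> complex" where
  "D_vec psi_hat u lam d k = infsum (\<lambda>l::int.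
      complex_of_real (\<bar>lam + 2 * of_int l * pi\<bar> powr (- 2 * d))
      * e_vec u (lam + 2 * of_int l * pi) k
      * cnj (psi_hat (lam + 2 * of_int l * pi))
      * psi_hat (2 powr (- real u) * (lam + 2 * of_int l * pi))) UNIV"

definition I_fun :: "(real \<Rightarrow> complex) \<Rightarrow> nat \<Rightarrow> real \<Rightarrow> real" where
  "I_fun psi_hat u d = (LBINT lam=-pi..pi. (\<Sum>k<2^u. (cmod (D_vec psi_hat u lam d k))^2))"

definition K_fun :: "(real \<Rightarrow> complex) \<Rightarrow> real \<Rightarrow> real" where
  "K_fun psi_hat d = (LINT \<xi>|lborel. \<bar>\<xi>\<bar> powr (- 2 * d) * (cmod (psi_hat \<xi>))^2)"

definition V_fun :: "(real \<Rightarrow> complex) \<Rightarrow> real \<Rightarrow> nat \<Rightarrow> nat \<Rightarrow> real" where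
  "V_fun psi_hat d i j =
     4 * pi * 2 powr (2 * d * real (max i j - min i j)) * 2 ^ (min i j)
       / (K_fun psi_hat d)^2 * I_fun psi_hat (max i j - min i j) d"

definition eta :: "nat \<Rightarrow> real" where
  "eta L = (\<Sum>j=0..L. real j * (2 powr (- real j) / (2 - 2 powr (- real L))))"

definition kappa :: "nat \<Rightarrow> real" where
  "kappa L = (\<Sum>j=0..L. (real j - eta L)^2 * (2 powr (- real j) / (2 - 2 powr (- real L))))"

definition w_AV :: "nat \<Rightarrow> nat \<Rightarrow> real" where
  "w_AV L i = (real i - eta L) * 2 powr (- real i)
      / (2 * ln 2 * kappa L * (2 - 2 powr (- real L)))"

definition g_fun :: "real \<Rightarrow> real" where
  "g_fun x = (LBINT lam=pi..2*pi. lam powr x)"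

end

theory Submission imports Defs begin

(* 1. Aliasing: for 0 < |lam| < pi, exactly one translate lam + 2 l pi lies in the band
      (l = -sgn lam), and there its modulus is 2 pi - |lam|.
   2. Hence the dilated factor psi_hat(2^-u (lam + 2 l pi)) is never in the band when
      u >= 1, so D_u vanishes almost everywhere and I_u = 0; for u = 0 the series D_0
      has one term, D_0(lam) = (2 pi - |lam|)^(-2d), and I_0 = 2 g(-4d).
   3. Folding the symmetric band onto [pi, 2 pi] gives K(d) = 2 g(-2d).
   4. So V_d is diagonal, V_d(i,i) = 2 pi 2^i g(-4d) / g(-2d)^2, and the quadratic form
      reduces to sum_i w_i^2 V_d(i,i), which is a multiple of the sum defining kappa. *)

definition shannon_spectrum :: "(real \<Rightarrow> complex) \<Rightarrow> bool" where
  "shannon_spectrum psi_hat \<longleftrightarrow>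
     (\<forall>\<xi>. (cmod (psi_hat \<xi>))^2 = (if \<bar>\<xi>\<bar> \<in> {pi..2*pi} then 1 else 0))"

lemma shannon_outside_band:
  assumes "shannon_spectrum psi_hat" and "\<bar>x\<bar> \<notin> {pi..2*pi}"
  shows "psi_hat x = 0"
  using assms unfolding shannon_spectrum_def by (metis norm_eq_zero zero_eq_power2)

lemma shannon_inside_band:
  assumes "shannon_spectrum psi_hat" and "\<bar>x\<bar> \<in> {pi..2*pi}"
  shows "cnj (psi_hat x) * psi_hat x = 1"
proof -
  have "cnj (psi_hat x) * psi_hat x = of_real ((cmod (psi_hat x))^2)"
    by (simp add: complex_norm_square[symmetric] mult.commute)
  also have "\<dots> = 1"
    using assms unfolding shannon_spectrum_def by simp
  finally show ?thesis .
qed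

lemma band_translate_unique:
  fixes lam :: real and l :: int
  assumes lam: "\<bar>lam\<bar> < pi" "lam \<noteq> 0" and band: "\<bar>lam + 2 * of_int l * pi\<bar> \<in> {pi..2*pi}"
  shows "l = (if lam > 0 then -1 else 1)"
proof -
  from band have lo: "pi \<le> \<bar>lam + 2 * of_int l * pi\<bar>" and hi: "\<bar>lam + 2 * of_int l * pi\<bar> \<le> 2*pi"
    by simp_all
  have "l \<le> 1"
  proof (rule ccontr)
    assume "\<not> l \<le> 1"
    then have "2 * pi \<le> of_int l * pi"
      using pi_gt_zero by (intro mult_right_mono) auto
    with lam(1) hi show False by (simp only: abs_le_iff abs_less_iff) linarith
  qed
  moreover have "l \<ge> -1"
  proof (rule ccontr)
    assume "\<not> l \<ge> -1"
    then have "of_int l * pi \<le> -2 * pi"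
      using pi_gt_zero by (intro mult_right_mono) auto
    with lam(1) hi show False by (simp only: abs_le_iff abs_less_iff) linarith
  qed
  ultimately consider "l = -1" | "l = 0" | "l = 1" by linarith
  then show ?thesis
  proof cases
    case 1
    then have "\<bar>lam - 2*pi\<bar> \<le> 2*pi" using hi by simp
    then have "lam \<ge> 0" by (simp only: abs_le_iff) linarith
    with 1 lam(2) show ?thesis by simp
  next
    case 2
    with lam lo show ?thesis by simp
  next
    case 3
    then have "\<bar>lam + 2*pi\<bar> \<le> 2*pi" using hi by simp
    then have "lam \<le> 0" by (simp only: abs_le_iff) linarith
    with 3 show ?thesis by simp
  qed
qed

lemma band_translate_abs:
  fixes lam :: real
  assumes "\<bar>lam\<bar> < pi"
  shows "\<bar>lam + 2 * of_int (if lam > 0 then -1 else 1 :: int) * pi\<bar> = 2*pi - \<bar>lam\<bar>"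
proof (cases "lam > 0")
  case True
  with assms show ?thesis by simp
next
  case False
  with assms show ?thesis by simp
qed

(* For u >= 1 the dilated translate 2^-u (lam + 2 l pi) has modulus < pi whenever
   lam + 2 l pi is in the band, so every term of the series D_u vanishes. *)
lemma D_vec_dilated_zero:
  assumes shannon: "shannon_spectrum psi_hat"
    and u: "u \<ge> 1" and lam: "\<bar>lam\<bar> < pi" "lam \<noteq> 0"
  shows "D_vec psi_hat u lam d k = 0"
  unfolding D_vec_def
proof (rule infsum_0)
  fix l :: int
  define x where "x = lam + 2 * of_int l * pi"
  have "cnj (psi_hat x) * psi_hat (2 powr (- real u) * x) = 0"
  proof (cases "\<bar>x\<bar> \<in> {pi..2*pi}")
    case False
    then show ?thesis using shannon_outside_band[OF shannon] by simp
  next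
    case True
    then have "\<bar>x\<bar> = 2*pi - \<bar>lam\<bar>"
      using band_translate_unique[OF lam] band_translate_abs[OF lam(1)] x_def by metis
    have "2 powr (- real u) \<le> 2 powr (-1)"
      using u by (intro powr_mono) auto
    then have "\<bar>2 powr (- real u) * x\<bar> \<le> \<bar>x\<bar> / 2"
      using mult_right_mono[of "2 powr (- real u)" "1/2" "\<bar>x\<bar>"]
      by (simp add: abs_mult powr_minus_divide)
    also have "\<dots> < pi"
      using \<open>\<bar>x\<bar> = 2*pi - \<bar>lam\<bar>\<close> lam by auto
    finally show ?thesis
      using shannon_outside_band[OF shannon] by simp
  qed
  then show "complex_of_real (\<bar>x\<bar> powr (- 2 * d)) * e_vec u x k * cnj (psi_hat x) *
         psi_hat (2 powr (- real u) * x) = 0"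
    by (simp add: mult.assoc)
qed

(* For u = 0 the series D_0 reduces to its single in-band term. *)
lemma D_vec_undilated:
  assumes shannon: "shannon_spectrum psi_hat" and lam: "\<bar>lam\<bar> < pi" "lam \<noteq> 0"
  shows "D_vec psi_hat 0 lam d 0 = of_real ((2*pi - \<bar>lam\<bar>) powr (-2*d))"
proof -
  define l0 :: int where "l0 = (if lam > 0 then -1 else 1)"
  define T where "T l = complex_of_real (\<bar>lam + 2 * of_int l * pi\<bar> powr (- 2 * d))
      * e_vec 0 (lam + 2 * of_int l * pi) 0
      * cnj (psi_hat (lam + 2 * of_int l * pi))
      * psi_hat (2 powr (- real 0) * (lam + 2 * of_int l * pi))" for l :: int
  have l0_abs: "\<bar>lam + 2 * of_int l0 * pi\<bar> = 2*pi - \<bar>lam\<bar>"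
    using band_translate_abs[OF lam(1)] by (simp add: l0_def)
  have "T l = 0" if "l \<noteq> l0" for l
    using that band_translate_unique[OF lam, of l] shannon_outside_band[OF shannon]
    by (auto simp: T_def l0_def)
  then have "infsum T UNIV = infsum T {l0}"
    by (intro infsum_cong_neutral) auto
  then have "D_vec psi_hat 0 lam d 0 = T l0"
    unfolding D_vec_def T_def[symmetric] by simp
  also have "\<dots> = of_real ((2*pi - \<bar>lam\<bar>) powr (-2*d))"
    using shannon_inside_band[OF shannon, of "lam + 2 * of_int l0 * pi"] l0_abs lam
    by (simp add: T_def e_vec_def mult.assoc)
  finally show ?thesis .
qed

lemma g_fun_eq_integral: "g_fun c = integral {pi..2*pi} (\<lambda>x. x powr c)"
proof -
  have "continuous_on {pi..2*pi} (\<lambda>x::real. x powr c)"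
    by (intro continuous_intros) (use pi_ge_two in auto)
  then have "set_integrable lborel {pi..2*pi} (\<lambda>x. x powr c)"
    unfolding set_integrable_def by (intro borel_integrable_compact) simp_all
  then show ?thesis
    unfolding g_fun_def by (intro interval_integral_eq_integral) (use pi_ge_two in auto)
qed

lemma integral_fold_band:
  fixes f :: "real \<Rightarrow> real"
  assumes a: "a \<ge> 0" and f: "continuous_on {a..2*a} f"
  shows "integral {-a..a} (\<lambda>x. f (2*a - \<bar>x\<bar>)) = 2 * integral {a..2*a} f"
proof -
  let ?h = "\<lambda>x. f (2*a - \<bar>x\<bar>)"
  have "continuous_on {-a..a} ?h"
    by (rule continuous_on_compose2[OF f]) (auto intro!: continuous_intros)
  then have "?h integrable_on {-a..a}"
    using integrable_continuous_real by blast
  moreover have "integral {-a..0} ?h = integral {a..2*a} f"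
  proof -
    have "integral {-a..0} ?h = integral {-a..0} (\<lambda>x. f (x + 2*a))"
      by (rule integral_cong) (simp add: add.commute)
    also have "\<dots> = integral {a..2*a} f"
      using integral_shift_real_ivl[of a "2*a" "2*a" f] by simp
    finally show ?thesis .
  qed
  moreover have "integral {0..a} ?h = integral {-a..0} ?h"
    using Henstock_Kurzweil_Integration.integral_reflect_real[where f = ?h and a = "-a" and b = 0] by simp
  ultimately show ?thesis
    using Henstock_Kurzweil_Integration.integral_combine[of "-a" 0 a ?h] a by simp
qed

(* K(d) = 2 g(-2d): the band is two mirror-image copies of [pi, 2 pi]. *)
lemma K_fun_shannon:
  assumes shannon: "shannon_spectrum psi_hat"
  shows "K_fun psi_hat d = 2 * g_fun (-2*d)"
proof -
  let ?f = "\<lambda>x::real. \<bar>x\<bar> powr (-2*d)"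
  let ?A = "{-2*pi..-pi}" and ?B = "{pi..2*pi}"
  have split: "\<bar>x\<bar> powr (- 2 * d) * (cmod (psi_hat x))\<^sup>2
      = indicator ?A x *\<^sub>R ?f x + indicator ?B x *\<^sub>R ?f x" for x
    using shannon unfolding shannon_spectrum_def by (auto simp: indicator_def)
  have "continuous_on ?A ?f" "continuous_on ?B ?f"
    by (intro continuous_intros; use pi_ge_two in force)+
  then have int: "set_integrable lborel ?A ?f" "set_integrable lborel ?B ?f"
    unfolding set_integrable_def by (intro borel_integrable_compact; simp)+
  have "K_fun psi_hat d = (LINT x|lborel. indicator ?A x *\<^sub>R ?f x + indicator ?B x *\<^sub>R ?f x)"
    unfolding K_fun_def split ..
  also have "\<dots> = (LINT x:?A|lborel. ?f x) + (LINT x:?B|lborel. ?f x)"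
    using int unfolding set_integrable_def set_lebesgue_integral_def
    by (rule Bochner_Integration.integral_add)
  also have "\<dots> = integral ?A ?f + integral ?B ?f"
    using int by (simp add: set_borel_integral_eq_integral)
  also have "integral ?A ?f = integral ?B ?f"
    using Henstock_Kurzweil_Integration.integral_reflect_real[where f = ?f and a = pi and b = "2*pi"] by simp
  also have "integral ?B ?f = g_fun (-2*d)"
    unfolding g_fun_eq_integral by (rule integral_cong) auto
  finally show ?thesis by simp
qed

(* The cross-scale integrals vanish: D_u = 0 away from the null set {0}. *)
lemma I_fun_dilated_zero:
  assumes shannon: "shannon_spectrum psi_hat" and u: "u \<ge> 1"
  shows "I_fun psi_hat u d = 0"
proof -
  have "I_fun psi_hat u d = (LBINT lam=-pi..pi. (0::real))"
    unfolding I_fun_def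
    by (rule interval_integral_discrete_difference[where X = "{0}"])
       (use pi_ge_two in \<open>auto simp: D_vec_dilated_zero[OF shannon u]\<close>)
  then show ?thesis by simp
qed

(* I_0 integrates D_0^2 = (2 pi - |lam|)^(-4d) over [-pi, pi], which folds onto g(-4d). *)
lemma I_fun_undilated:
  assumes shannon: "shannon_spectrum psi_hat"
  shows "I_fun psi_hat 0 d = 2 * g_fun (-4*d)"
proof -
  let ?h = "\<lambda>x::real. (2*pi - \<bar>x\<bar>) powr (-4*d)"
  have sq: "((2*pi - \<bar>x\<bar>) powr (-(2*d)))^2 = (2*pi - \<bar>x\<bar>) powr (-(4*d))" for x
    by (simp add: power2_eq_square powr_add[symmetric])
  have cont: "continuous_on {pi..2*pi} (\<lambda>x. x powr (-4*d))"
    by (intro continuous_intros) (use pi_ge_two in auto)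
  have "I_fun psi_hat 0 d = (LBINT lam=-pi..pi. ?h lam)"
    unfolding I_fun_def
    by (rule interval_integral_discrete_difference[where X = "{0}"])
       (use pi_ge_two in \<open>auto simp: D_vec_undilated[OF shannon] sq\<close>)
  also have "\<dots> = integral {-pi..pi} ?h"
  proof (rule interval_integral_eq_integral)
    have "continuous_on {-pi..pi} ?h"
      by (intro continuous_intros) (auto simp: abs_if)
    then show "set_integrable lborel {-pi..pi} ?h"
      unfolding set_integrable_def by (intro borel_integrable_compact) auto
  qed (use pi_ge_two in simp)
  also have "\<dots> = 2 * g_fun (-4*d)"
    using integral_fold_band[OF _ cont] pi_ge_two by (simp add: g_fun_eq_integral)
  finally show ?thesis .
qed

(* Different scales i, j give I_|i-j| with |i-j| >= 1, hence zero covariance. *)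
lemma V_fun_off_diagonal:
  assumes "shannon_spectrum psi_hat" and "i \<noteq> j"
  shows "V_fun psi_hat d i j = 0"
proof -
  have "max i j - min i j \<ge> 1" using assms(2) by linarith
  then show ?thesis
    unfolding V_fun_def by (simp add: I_fun_dilated_zero[OF assms(1)])
qed

lemma V_fun_diagonal:
  assumes "shannon_spectrum psi_hat"
  shows "V_fun psi_hat d i i = 2 * pi * 2^i * g_fun (-4*d) / (g_fun (-2*d))^2"
  unfolding V_fun_def
  by (simp add: I_fun_undilated[OF assms] K_fun_shannon[OF assms] power_mult_distrib)

lemma quadratic_form_diagonal:
  fixes w :: "nat \<Rightarrow> real" and V :: "nat \<Rightarrow> nat \<Rightarrow> real"
  assumes "finite A" and "\<And>i j. i \<noteq> j \<Longrightarrow> V i j = 0"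
  shows "(\<Sum>i\<in>A. \<Sum>j\<in>A. w i * V i j * w j) = (\<Sum>i\<in>A. (w i)^2 * V i i)"
proof (rule sum.cong)
  fix i assume "i \<in> A"
  have "(\<Sum>j\<in>A. w i * V i j * w j) = (\<Sum>j\<in>A. if j = i then w i * V i i * w i else 0)"
    using assms(2) by (intro sum.cong) auto
  then show "(\<Sum>j\<in>A. w i * V i j * w j) = (w i)^2 * V i i"
    using \<open>i \<in> A\<close> assms(1) by (simp add: power2_eq_square)
qed simp

lemma kappa_unnormalised:
  "(\<Sum>i=0..L. (real i - eta L)^2 * 2 powr (- real i)) = kappa L * (2 - 2 powr (- real L))"
proof -
  have "2 powr (- real L) < 2 powr 1"
    by (intro powr_less_mono) auto
  then show ?thesis
    unfolding kappa_def by (simp add: sum_divide_distrib[symmetric] times_divide_eq_right)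
qed

(* The diagonal contribution of scale i: the factors 2^-i (weights) and 2^i (V) cancel. *)
lemma weighted_diagonal_term:
  assumes "shannon_spectrum psi_hat"
  shows "(w_AV L i)^2 * V_fun psi_hat d i i
    = (real i - eta L)^2 * 2 powr (- real i) * (2 * pi * g_fun (-4*d) / (g_fun (-2*d))^2)
      / (2 * ln 2 * kappa L * (2 - 2 powr (- real L)))^2"
proof -
  define A where "A = 2 * ln 2 * kappa L * (2 - 2 powr (- real L))"
  define C where "C = 2 * pi * g_fun (-4*d) / (g_fun (-2*d))^2"
  define p :: real where "p = 2 powr (- real i)"
  have cancel: "p * 2 ^ i = 1"
    by (simp add: p_def powr_minus powr_realpow)
  have "(w_AV L i)^2 * V_fun psi_hat d i i = ((real i - eta L) * p / A)^2 * (2 ^ i * C)"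
    unfolding w_AV_def V_fun_diagonal[OF assms] A_def C_def p_def by (simp add: mult.assoc)
  also have "\<dots> = (real i - eta L)^2 * p * (p * 2 ^ i) * C / A^2"
    by (simp add: power2_eq_square mult_ac)
  also have "\<dots> = (real i - eta L)^2 * p * C / A^2"
    by (simp only: cancel mult_1_right)
  finally show ?thesis
    by (simp add: A_def C_def p_def)
qed

theorem mainTheorem12:
  fixes psi_hat :: "real \<Rightarrow> complex" and d :: real and L :: nat
  assumes shannon: "\<And>\<xi>. (cmod (psi_hat \<xi>))^2 = (if \<bar>\<xi>\<bar> \<in> {pi..2*pi} then 1 else 0)"
    and l_ge: "L \<ge> 1"
  shows "(\<Sum>i=0..L. \<Sum>j=0..L. w_AV L i * V_fun psi_hat d i j * w_AV L j)
       = pi * g_fun (-4 * d)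
         / (2 * (2 - 2 powr (- real L)) * kappa L * (ln 2)^2 * (g_fun (-2 * d))^2)"
proof -
  (* The identity holds for every L. *)
  have spec: "shannon_spectrum psi_hat"
    using shannon by (simp add: shannon_spectrum_def)
  define S where "S = 2 - 2 powr (- real L)"
  define C where "C = 2 * pi * g_fun (-4*d) / (g_fun (-2*d))^2"
  have "(\<Sum>i=0..L. \<Sum>j=0..L. w_AV L i * V_fun psi_hat d i j * w_AV L j)
      = (\<Sum>i=0..L. (w_AV L i)^2 * V_fun psi_hat d i i)"
    using V_fun_off_diagonal[OF spec] by (intro quadratic_form_diagonal) auto
  also have "\<dots> = (\<Sum>i=0..L. (real i - eta L)^2 * 2 powr (- real i)) * C
                   / (2 * ln 2 * kappa L * S)^2"
    unfolding weighted_diagonal_term[OF spec] C_def S_def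
    by (simp add: sum_divide_distrib sum_distrib_right)
  also have "\<dots> = kappa L * S * C / (2 * ln 2 * kappa L * S)^2"
    unfolding kappa_unnormalised S_def ..
  also have "\<dots> = pi * g_fun (-4 * d) / (2 * S * kappa L * (ln 2)^2 * (g_fun (-2 * d))^2)"
    unfolding C_def by (simp add: power2_eq_square)
  finally show ?thesis by (simp add: S_def)
qed

end
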